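(* Let $\mathcal P$ consist of exactly two propositional variables, let $\mathcal E=\mathcal L_{\mathcal P}^*/\!\equiv$ be the set of consistent formulas modulo logical equivalence, and let $B(\varphi)=\varphi$ for every $\varphi\in\mathcal E$. Let $\nabla$ be an ES basic fusion operator on this epistemic space whose representing basic assignment $\Phi\mapsto\succeq_\Phi$ satisfies the Maximality Condition. Then $\nabla$ does not satisfy (ESF-SD).
   Context: $\mathcal W_{\mathcal P}$ denotes valuations, $[\![\phi]\!]$ models, $\varphi_M$ a formula with models exactly $M$. Agents form a well-ordered set $\mathcal S$; a society is a nonempty finite $N\subseteq\mathcal S$; an $N$-profile is $\Phi:N\to\mathcal E$, $E_i=\Phi(i)$, identified with $E_i$ if $N=\{i\}$; profiles on $\{i_1<\dots<i_n\}$ and $\{j_1<\dots<j_m\}$ are equivalent if $n=m$ and entries coincide position-wise. An ES combination operator maps (profile, $E\in\mathcal E$) to $\nabla(\Phi,E)\in\mathcal E$; it is an ES basic fusion operator if (ESF1) $B(\nabla(\Phi,E))\vdash B(E)$; (ESF2) equivalent profiles and $B(E)\equiv B(E')$ give $B(\nabla(\Phi,E))\equiv B(\nabla(\Phi',E'))$; (ESF3) if $B(E)\equiv B(E')\wedge B(E'')$ then $B(\nabla(\Phi,E'))\wedge B(E'')\vdash B(\nabla(\Phi,E))$; (ESF4) if moreover $B(\nabla(\Phi,E'))\wedge B(E'')\nvdash\bot$ then $B(\nabla(\Phi,E))\vdash B(\nabla(\Phi,E'))\wedge B(E'')$. For such $\nabla$ there is a unique assignment $\Phi\mapsto\succeq_\Phi$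 (total preorders on $\mathcal W_{\mathcal P}$, equal on equivalent profiles) with $[\![B(\nabla(\Phi,E))]\!]=\max([\![B(E)]\!],\succeq_\Phi)$, where $\max(C,\succeq)=\{c\in C:c\succeq x\ \forall x\in C\}$. Maximality Condition: $[\![B(E_i)]\!]=\max(\succeq_{E_i})$ for every agent $i$ and $i$-profile $E_i$. (ESF-SD): for every agent $i$, every three interpretations $w,w',w''$ and every $E_{w,w'},E_{w',w''}$ with $[\![B(E_{w,w'})]\!]=\{w,w'\}$, $[\![B(E_{w',w''})]\!]=\{w',w''\}$, for each of the following four requirements there exists an $i$-profile $E_i$ meeting it: (i) $B(\nabla(E_i,E_{w,w'}))\equiv\varphi_{w,w'}$ and $B(\nabla(E_i,E_{w',w''}))\equiv\varphi_{w',w''}$; (ii) $\equiv\varphi_{w,w'}$ and $\equiv\varphi_{w'}$; (iii) $\equiv\varphi_w$ and $\equiv\varphi_{w',w''}$; (iv) $\equiv\varphi_w$ and $\equiv\varphi_{w'}$. *)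

theory Defs
  imports Main
begin

(* Epistemic space E = consistent formulas modulo equivalence, represented by
   their (nonempty) sets of models; B is the identity, so B(E) is E itself and
   entailment B(E) |- B(E') is inclusion of model sets. *)

type_synonym ('i, 'w) profile = "'i \<Rightarrow> 'w set option"

definition epist :: "'w set \<Rightarrow> bool" where
  "epist E \<longleftrightarrow> E \<noteq> {}"

definition is_profile :: "('i, 'w) profile \<Rightarrow> bool" where
  "is_profile Phi \<longleftrightarrow> finite (dom Phi) \<and> dom Phi \<noteq> {} \<and> (\<forall>E\<in>ran Phi. epist E)"

definition entries :: "('i::linorder, 'w) profile \<Rightarrow> 'w set list" where
  "entries Phi = map (\<lambda>i. the (Phi i)) (sorted_list_of_set (dom Phi))"

definition equiv_profiles :: "('i::linorder, 'w) profile \<Rightarrow> ('i, 'w) profile \<Rightarrow> bool" where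
  "equiv_profiles Phi Psi \<longleftrightarrow> entries Phi = entries Psi"

definition single_profile :: "'i \<Rightarrow> 'w set \<Rightarrow> ('i, 'w) profile" where
  "single_profile i E = [i \<mapsto> E]"

definition ES_combination_operator ::
  "(('i, 'w) profile \<Rightarrow> 'w set \<Rightarrow> 'w set) \<Rightarrow> bool" where
  "ES_combination_operator nabla \<longleftrightarrow>
     (\<forall>Phi E. is_profile Phi \<and> epist E \<longrightarrow> epist (nabla Phi E))"

definition ES_basic_fusion_operator ::
  "(('i::linorder, 'w) profile \<Rightarrow> 'w set \<Rightarrow> 'w set) \<Rightarrow> bool" where
  "ES_basic_fusion_operator nabla \<longleftrightarrow>
     ES_combination_operator nabla \<and>
     \<comment> \<open>ESF1\<close>
     (\<forall>Phi E. is_profile Phi \<and> epist E \<longrightarrow> nabla Phi E \<subseteq> E) \<and>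
     \<comment> \<open>ESF2\<close>
     (\<forall>Phi Phi' E E'. is_profile Phi \<and> is_profile Phi' \<and> epist E \<and> epist E' \<and>
        equiv_profiles Phi Phi' \<and> E = E' \<longrightarrow> nabla Phi E = nabla Phi' E') \<and>
     \<comment> \<open>ESF3\<close>
     (\<forall>Phi E E' E''. is_profile Phi \<and> epist E \<and> epist E' \<and> epist E'' \<and>
        E = E' \<inter> E'' \<longrightarrow> nabla Phi E' \<inter> E'' \<subseteq> nabla Phi E) \<and>
     \<comment> \<open>ESF4\<close>
     (\<forall>Phi E E' E''. is_profile Phi \<and> epist E \<and> epist E' \<and> epist E'' \<and>
        E = E' \<inter> E'' \<and> nabla Phi E' \<inter> E'' \<noteq> {} \<longrightarrow> nabla Phi E \<subseteq> nabla Phi E' \<inter> E'')"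

definition total_preorder :: "('w \<Rightarrow> 'w \<Rightarrow> bool) \<Rightarrow> bool" where
  "total_preorder R \<longleftrightarrow> (\<forall>x y z. R x y \<and> R y z \<longrightarrow> R x z) \<and> (\<forall>x y. R x y \<or> R y x)"

definition maxset :: "'w set \<Rightarrow> ('w \<Rightarrow> 'w \<Rightarrow> bool) \<Rightarrow> 'w set" where
  "maxset C R = {c \<in> C. \<forall>x\<in>C. R c x}"

definition represents ::
  "(('i::linorder, 'w) profile \<Rightarrow> 'w set \<Rightarrow> 'w set) \<Rightarrow> (('i, 'w) profile \<Rightarrow> 'w \<Rightarrow> 'w \<Rightarrow> bool) \<Rightarrow> bool" where
  "represents nabla R \<longleftrightarrow>
     (\<forall>Phi. is_profile Phi \<longrightarrow> total_preorder (R Phi)) \<and>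
     (\<forall>Phi Psi. is_profile Phi \<and> is_profile Psi \<and> equiv_profiles Phi Psi \<longrightarrow> R Phi = R Psi) \<and>
     (\<forall>Phi E. is_profile Phi \<and> epist E \<longrightarrow> nabla Phi E = maxset E (R Phi))"

definition maximality_condition :: "(('i, 'w) profile \<Rightarrow> 'w \<Rightarrow> 'w \<Rightarrow> bool) \<Rightarrow> bool" where
  "maximality_condition R \<longleftrightarrow>
     (\<forall>i E. epist E \<longrightarrow> E = maxset UNIV (R (single_profile i E)))"

definition ESF_SD :: "(('i, 'w) profile \<Rightarrow> 'w set \<Rightarrow> 'w set) \<Rightarrow> bool" where
  "ESF_SD nabla \<longleftrightarrow>
     (\<forall>i w w' w''. w \<noteq> w' \<and> w' \<noteq> w'' \<and> w \<noteq> w'' \<longrightarrow>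
        (\<exists>E. epist E \<and> nabla (single_profile i E) {w, w'} = {w, w'}
                    \<and> nabla (single_profile i E) {w', w''} = {w', w''}) \<and>
        (\<exists>E. epist E \<and> nabla (single_profile i E) {w, w'} = {w, w'}
                    \<and> nabla (single_profile i E) {w', w''} = {w'}) \<and>
        (\<exists>E. epist E \<and> nabla (single_profile i E) {w, w'} = {w}
                    \<and> nabla (single_profile i E) {w', w''} = {w', w''}) \<and>
        (\<exists>E. epist E \<and> nabla (single_profile i E) {w, w'} = {w}
                    \<and> nabla (single_profile i E) {w', w''} = {w'}))"

end

theory Submission
  imports Defs "HOL-Library.Cardinality"
begin

text \<open>With two variables there are exactly four interpretations. Write
  \<open>\<succeq>\<^sub>E\<close> for the preorder of the single-agent profile \<open>E\<close>;
  by the Maximality Condition every model of \<open>E\<close> is a top element of it.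
  Hence if \<open>\<succeq>\<^sub>E\<close> puts \<open>x\<close> strictly above
  \<open>y\<close> and \<open>z\<close>, then \<open>E \<subseteq> {x, u}\<close> for the
  fourth interpretation \<open>u\<close>. (ESF-SD) yields three such preorders that
  differ in how they compare \<open>y\<close> and \<open>z\<close>; they come from
  three different nonempty subsets of \<open>{x, u}\<close>, so one of them is
  \<open>{u}\<close>. Thus \<open>x\<close> is strictly above \<open>y\<close> in the
  preorder of \<open>{u}\<close>, and exchanging the roles of \<open>x\<close> and
  \<open>y\<close> gives a contradiction.\<close>

definition strict_pref :: "('w \<Rightarrow> 'w \<Rightarrow> bool) \<Rightarrow> 'w \<Rightarrow> 'w \<Rightarrow> bool" where
  "strict_pref R x y \<longleftrightarrow> R x y \<and> \<not> R y x"

lemma strict_pref_weak_trans: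
  assumes "total_preorder R" "strict_pref R x y" "R y z"
  shows "strict_pref R x z"
  using assms unfolding total_preorder_def strict_pref_def by blast

lemma maxset_pair_eq_pair:
  assumes "maxset {x, y} R = {x, y}"
  shows "R x y" "R y x"
proof -
  have "x \<in> maxset {x, y} R" "y \<in> maxset {x, y} R"
    using assms by auto
  then show "R x y" "R y x"
    unfolding maxset_def by auto
qed

lemma maxset_pair_eq_singleton:
  assumes "x \<noteq> y" "total_preorder R" "maxset {x, y} R = {x}"
  shows "strict_pref R x y"
proof -
  have "x \<in> maxset {x, y} R" "y \<notin> maxset {x, y} R"
    using assms(1,3) by auto
  moreover have "R y y"
    using assms(2) unfolding total_preorder_def by blast
  ultimately show ?thesis
    unfolding maxset_def strict_pref_def by auto
qed

lemma singleton_among_three_nonempty_subsets: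
  assumes "A \<subseteq> {x, u}" "B \<subseteq> {x, u}" "C \<subseteq> {x, u}"
    and "A \<noteq> {}" "B \<noteq> {}" "C \<noteq> {}"
    and "A \<noteq> B" "A \<noteq> C" "B \<noteq> C"
  shows "{u} \<in> {A, B, C}"
  using assms by blast

lemma strict_pref_in_singleton_assignment:
  fixes ge :: "'w set \<Rightarrow> 'w \<Rightarrow> 'w \<Rightarrow> bool"
  assumes worlds: "UNIV = {x, y, z, u}"
    and total: "\<And>E. E \<noteq> {} \<Longrightarrow> total_preorder (ge E)"
    and models_top: "\<And>E v w. E \<noteq> {} \<Longrightarrow> v \<in> E \<Longrightarrow> ge E v w"
    and "\<exists>E. E \<noteq> {} \<and> strict_pref (ge E) x y \<and> strict_pref (ge E) y z"
    and "\<exists>E. E \<noteq> {} \<and> strict_pref (ge E) x y \<and> ge E y z \<and> ge E z y"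
    and "\<exists>E. E \<noteq> {} \<and> strict_pref (ge E) x z \<and> strict_pref (ge E) z y"
  shows "strict_pref (ge {u}) x y"
proof -
  have dominated_not_model: "w \<notin> E" if "E \<noteq> {}" "strict_pref (ge E) v w" for E v w
    using that models_top unfolding strict_pref_def by blast
  have models_subset: "E \<subseteq> {x, u}"
    if "E \<noteq> {}" "strict_pref (ge E) x y" "strict_pref (ge E) x z" for E
  proof -
    have "y \<notin> E" "z \<notin> E"
      using dominated_not_model that by blast+
    then show ?thesis
      using worlds by blast
  qed
  obtain E1 where E1: "E1 \<noteq> {}" "strict_pref (ge E1) x y" "strict_pref (ge E1) y z"
    using assms(4) by blast
  obtain E2 where E2: "E2 \<noteq> {}" "strict_pref (ge E2) x y" "ge E2 y z" "ge E2 z y"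
    using assms(5) by blast
  obtain E3 where E3: "E3 \<noteq> {}" "strict_pref (ge E3) x z" "strict_pref (ge E3) z y"
    using assms(6) by blast
  have E1_xz: "strict_pref (ge E1) x z"
    using strict_pref_weak_trans[OF total[OF E1(1)] E1(2)] E1(3)
    unfolding strict_pref_def by blast
  have E2_xz: "strict_pref (ge E2) x z"
    using strict_pref_weak_trans[OF total[OF E2(1)] E2(2) E2(3)] .
  have E3_xy: "strict_pref (ge E3) x y"
    using strict_pref_weak_trans[OF total[OF E3(1)] E3(2)] E3(3)
    unfolding strict_pref_def by blast
  have "E1 \<noteq> E2" "E1 \<noteq> E3" "E2 \<noteq> E3"
    using E1(3) E2(3,4) E3(3) unfolding strict_pref_def by blast+
  moreover have "E1 \<subseteq> {x, u}" "E2 \<subseteq> {x, u}" "E3 \<subseteq> {x, u}"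
    using models_subset E1(1,2) E1_xz E2(1,2) E2_xz E3(1,2) E3_xy by blast+
  ultimately have "{u} \<in> {E1, E2, E3}"
    using E1(1) E2(1) E3(1) by (intro singleton_among_three_nonempty_subsets)
  then show ?thesis
    using E1(2) E2(2) E3_xy by blast
qed

lemma card_4E:
  assumes "card A = 4"
  obtains a b c d where "A = {a, b, c, d}" "distinct [a, b, c, d]"
proof -
  obtain d B where "A = insert d B" "d \<notin> B" "card B = 3"
    using card_eq_SucD[of A 3] assms by auto
  moreover obtain a b c where "B = {a, b, c}" "a \<noteq> b" "b \<noteq> c" "a \<noteq> c"
    using \<open>card B = 3\<close> card_3_iff by metis
  ultimately show ?thesis
    using that[of a b c d] by auto
qed

lemma no_singleton_assignment_on_four_worlds:
  fixes ge :: "'w set \<Rightarrow> 'w \<Rightarrow> 'w \<Rightarrow> bool"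
  assumes "CARD('w) = 4"
    and total: "\<And>E. E \<noteq> {} \<Longrightarrow> total_preorder (ge E)"
    and models_top: "\<And>E v w. E \<noteq> {} \<Longrightarrow> v \<in> E \<Longrightarrow> ge E v w"
    and chain: "\<And>x y z. distinct [x, y, z] \<Longrightarrow>
      \<exists>E. E \<noteq> {} \<and> strict_pref (ge E) x y \<and> strict_pref (ge E) y z"
    and tie: "\<And>x y z. distinct [x, y, z] \<Longrightarrow>
      \<exists>E. E \<noteq> {} \<and> strict_pref (ge E) x y \<and> ge E y z \<and> ge E z y"
  shows False
proof -
  obtain a b c d :: 'w where worlds: "UNIV = {a, b, c, d}" and "distinct [a, b, c, d]"
    using card_4E assms(1) by blast
  have "strict_pref (ge {c}) d a"
  proof (rule strict_pref_in_singleton_assignment[where ge = ge and z = b])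
    show "UNIV = {d, a, b, c}"
      using worlds by auto
  qed (use total models_top chain tie \<open>distinct _\<close> in auto)
  moreover have "strict_pref (ge {c}) a d"
  proof (rule strict_pref_in_singleton_assignment[where ge = ge and z = b])
    show "UNIV = {a, d, b, c}"
      using worlds by auto
  qed (use total models_top chain tie \<open>distinct _\<close> in auto)
  ultimately show False
    unfolding strict_pref_def by blast
qed

lemma single_profile_is_profile:
  "E \<noteq> {} \<Longrightarrow> is_profile (single_profile i E)"
  by (simp add: is_profile_def single_profile_def epist_def)

lemma represents_single_profile:
  assumes "represents nabla R" "E \<noteq> {}"
  shows "total_preorder (R (single_profile i E))"
    and "F \<noteq> {} \<Longrightarrow> nabla (single_profile i E) F = maxset F (R (single_profile i E))"
  using assms(1) single_profile_is_profile[OF assms(2), of i]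
  by (simp_all add: represents_def epist_def)

lemma maximality_condition_models_top:
  assumes "maximality_condition R" "x \<in> E"
  shows "R (single_profile i E) x y"
proof -
  have "x \<in> maxset UNIV (R (single_profile i E))"
    using assms unfolding maximality_condition_def epist_def by blast
  then show ?thesis
    unfolding maxset_def by blast
qed

lemma represents_single_profile_pair_eq_singleton:
  assumes "represents nabla R" "E \<noteq> {}" "x \<noteq> y"
    and "nabla (single_profile i E) {x, y} = {x}"
  shows "strict_pref (R (single_profile i E)) x y"
  using assms(4) maxset_pair_eq_singleton[OF assms(3) represents_single_profile(1)[OF assms(1,2)]]
  by (simp add: represents_single_profile(2)[OF assms(1,2)])

lemma represents_single_profile_pair_eq_pair:
  assumes "represents nabla R" "E \<noteq> {}"
    and "nabla (single_profile i E) {x, y} = {x, y}"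
  shows "R (single_profile i E) x y" "R (single_profile i E) y x"
  using assms(3) maxset_pair_eq_pair[of x y "R (single_profile i E)"]
  by (simp_all add: represents_single_profile(2)[OF assms(1,2)])

lemma ESF_SD_strict_chain:
  assumes "represents nabla R" "ESF_SD nabla" "distinct [x, y, z]"
  shows "\<exists>E. E \<noteq> {} \<and> strict_pref (R (single_profile i E)) x y
                     \<and> strict_pref (R (single_profile i E)) y z"
proof -
  obtain E where "epist E"
    and "nabla (single_profile i E) {x, y} = {x}" "nabla (single_profile i E) {y, z} = {y}"
    using assms(2)[unfolded ESF_SD_def, rule_format, of x y z i] assms(3) by auto
  with assms(3) show ?thesis
    unfolding epist_def
    by (intro exI[of _ E] conjI represents_single_profile_pair_eq_singleton[OF assms(1)])
      simp_all
qed

lemma ESF_SD_strict_then_tie: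
  assumes "represents nabla R" "ESF_SD nabla" "distinct [x, y, z]"
  shows "\<exists>E. E \<noteq> {} \<and> strict_pref (R (single_profile i E)) x y
                     \<and> R (single_profile i E) y z \<and> R (single_profile i E) z y"
proof -
  obtain E where "epist E"
    and "nabla (single_profile i E) {x, y} = {x}" "nabla (single_profile i E) {y, z} = {y, z}"
    using assms(2)[unfolded ESF_SD_def, rule_format, of x y z i] assms(3) by auto
  with assms(3) show ?thesis
    unfolding epist_def
    by (intro exI[of _ E] conjI represents_single_profile_pair_eq_singleton[OF assms(1)]
        represents_single_profile_pair_eq_pair[OF assms(1)]) simp_all
qed

theorem theorem4:
  fixes nabla :: "('i::wellorder, 'p \<Rightarrow> bool) profile \<Rightarrow> ('p \<Rightarrow> bool) set \<Rightarrow> ('p \<Rightarrow> bool) set"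
  assumes "finite (UNIV :: 'p set)" and "card (UNIV :: 'p set) = 2"
    and "ES_basic_fusion_operator nabla"
    and "\<exists>R. represents nabla R \<and> maximality_condition R"
  shows "\<not> ESF_SD nabla"
proof
  assume sd: "ESF_SD nabla"
  obtain R where rep: "represents nabla R" and max: "maximality_condition R"
    using assms(4) by blast
  fix i :: 'i
  show False
  proof (rule no_singleton_assignment_on_four_worlds[where ge = "\<lambda>E. R (single_profile i E)"])
    show "CARD('p \<Rightarrow> bool) = 4"
      using assms(2) by (simp add: card_fun)
  qed (use represents_single_profile(1)[OF rep] maximality_condition_models_top[OF max]
         ESF_SD_strict_chain[OF rep sd] ESF_SD_strict_then_tie[OF rep sd] in auto)
qed

end
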